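(* Let $\tau\in\mathbb N$, $\tau\ge1$. Let $\widehat C_a=\left(\frac{y\eta_{c,a}D}{\eta_{p,a}c_bc_2(1-p)}\right)^{\frac1{p+y-1}}$ and assume $\eta_{p,a}c_bc_2(1-p)(2-p)\ge Dy(y+1)\eta_{c,a}$, $y>1-p$, and $\Phi\ge0$. Let $\widetilde C_a=\arg\max_{C_a\in\{\lfloor\widehat C_a\rfloor,\lceil\widehat C_a\rceil\}}\underline U_a(C_a,\widetilde\Delta)$ be the attacker's robust equilibrium attacking extent (with $\widetilde\Delta$ the defenders' robust equilibrium protection extents). If $$\eta_{p,a}c_bc_2(1-p)\ge y\eta_{c,a}D\,\tau^{1-p-y},$$ then $\widehat C_a\le\tau$ and $\widetilde C_a\le\tau$, i.e. a $\tau$-equilibrium is achieved.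
   Context: Setting: a finite set $\mathcal C$ of defenders and one attacker. Defender $k$ chooses protection extent $\Delta_k\in[0,D]$; the attacker chooses attacking extent (number of rounds) $C_a\ge0$. Constants: $D>0$, $c_a,c_b,c_0,c_2>0$, $p\in(0,1)$, $x>0$, $y\ge0$; preference weights $\eta_{m,k},\eta_{p,k},\eta_{c,k}\in[0,1]$ summing to $1$, and $\eta_{p,a},\eta_{c,a}\in(0,1]$ with $\eta_{p,a}+\eta_{c,a}=1$. Protection cost $C(\Delta_k)=\Delta_k^x$, attacking cost $E(C_a)=1-C_a^{-y}$. The attacker's lower-bound payoff is, for $C_a>0$, $\underline U_a(C_a,\Delta)=\eta_{p,a}\sum_{k\in\mathcal C}\Big(1-\frac{c_b\Delta_k+c_bc_2C_a^{p-1}}{D}\Big)-\eta_{c,a}|\mathcal C|E(C_a)$, and $0$ for $C_a=0$. Robust equilibrium uses the infimum operator: each player maximizes his own lower-bound payoff given the others' strategies. A $\tau$-equilibrium is a robust equilibrium in which the attacker's attacking extent does not exceed $\tau$. $\Phi:=\frac{D}{c_b}|\mathcal C|-c_2|\mathcal C|\widehat C_a^{\,p-1}-\frac{\eta_{c,a}|\mathcal C|D}{\eta_{p,a}c_b}+\frac{\eta_{c,a}|\mathcal C|D}{\widehat C_a^{\,y}\eta_{p,a}c_b}$. *)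

theory Defs
  imports Complex_Main
begin

definition atk_cost :: "real \<Rightarrow> real \<Rightarrow> real" where
  "atk_cost y Ca = 1 - Ca powr (- y)"

definition U_att_lower ::
  "'k set \<Rightarrow> real \<Rightarrow> real \<Rightarrow> real \<Rightarrow> real \<Rightarrow> real \<Rightarrow> real \<Rightarrow> real \<Rightarrow> real \<Rightarrow> ('k \<Rightarrow> real) \<Rightarrow> real" where
  "U_att_lower C D cb c2 p y eta_pa eta_ca Ca \<Delta> =
     (if Ca = 0 then 0 else
       eta_pa * (\<Sum>k\<in>C. 1 - (cb * \<Delta> k + cb * c2 * Ca powr (p - 1)) / D)
       - eta_ca * real (card C) * atk_cost y Ca)"

definition C_hat :: "real \<Rightarrow> real \<Rightarrow> real \<Rightarrow> real \<Rightarrow> real \<Rightarrow> real \<Rightarrow> real \<Rightarrow> real" where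
  "C_hat D cb c2 p y eta_pa eta_ca =
     (y * eta_ca * D / (eta_pa * cb * c2 * (1 - p))) powr (1 / (p + y - 1))"

definition Phi :: "'k set \<Rightarrow> real \<Rightarrow> real \<Rightarrow> real \<Rightarrow> real \<Rightarrow> real \<Rightarrow> real \<Rightarrow> real \<Rightarrow> real" where
  "Phi C D cb c2 p y eta_pa eta_ca =
     (let Ch = C_hat D cb c2 p y eta_pa eta_ca; n = real (card C) in
       D / cb * n - c2 * n * Ch powr (p - 1) - eta_ca * n * D / (eta_pa * cb)
       + eta_ca * n * D / (Ch powr y * eta_pa * cb))"

end

theory Submission
  imports Defs
begin

text \<open>With e = p + y - 1 > 0, \<open>\<widehat>C_a\<close> is the e-th root of
  y \<eta>_{c,a} D / (\<eta>_{p,a} c_b c_2 (1 - p)), so \<open>\<widehat>C_a \<le> \<tau>\<close> is equivalent to the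
  hypothesis on \<open>\<tau>\<close> after raising both sides to the power e. Both candidates
  \<open>\<lfloor>\<widehat>C_a\<rfloor>\<close> and \<open>\<lceil>\<widehat>C_a\<rceil>\<close> for \<open>\<widetilde>C_a\<close> then stay below the integer \<open>\<tau>\<close>.\<close>

lemma powr_inverse_le_iff:
  fixes a t e :: real
  assumes "0 < a" "0 < t" "0 < e"
  shows "a powr (1 / e) \<le> t \<longleftrightarrow> a \<le> t powr e"
proof
  assume "a powr (1 / e) \<le> t"
  then have "(a powr (1 / e)) powr e \<le> t powr e"
    using assms by (intro powr_mono2) auto
  then show "a \<le> t powr e"
    using assms by (simp add: powr_powr)
next
  assume "a \<le> t powr e"
  then have "a powr (1 / e) \<le> (t powr e) powr (1 / e)"
    using assms by (intro powr_mono2) auto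
  then show "a powr (1 / e) \<le> t"
    using assms by (simp add: powr_powr)
qed

lemma C_hat_le_iff:
  fixes D cb c2 p y eta_pa eta_ca t :: real
  assumes "0 < D" "0 < cb" "0 < c2" "p < 1" "1 - p < y" "0 < eta_pa" "0 < eta_ca" "0 < t"
  shows "C_hat D cb c2 p y eta_pa eta_ca \<le> t \<longleftrightarrow>
         y * eta_ca * D * t powr (1 - p - y) \<le> eta_pa * cb * c2 * (1 - p)"
proof -
  define e where "e = p + y - 1"
  define K where "K = eta_pa * cb * c2 * (1 - p)"
  have "0 < e" "0 < K" "0 < y"
    using assms by (auto simp: e_def K_def)
  have "0 < t powr e"
    using \<open>0 < t\<close> by simp
  have t_neg: "t powr (1 - p - y) = 1 / t powr e"
    using powr_minus_divide [of t e] by (simp add: e_def diff_diff_eq)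
  have "C_hat D cb c2 p y eta_pa eta_ca \<le> t \<longleftrightarrow> y * eta_ca * D / K \<le> t powr e"
    unfolding C_hat_def K_def e_def [symmetric]
    using assms \<open>0 < e\<close> \<open>0 < y\<close> K_def \<open>0 < K\<close>
    by (intro powr_inverse_le_iff) auto
  also have "\<dots> \<longleftrightarrow> y * eta_ca * D * t powr (1 - p - y) \<le> K"
    using \<open>0 < K\<close> \<open>0 < t powr e\<close>
    by (simp add: t_neg pos_divide_le_eq mult.commute)
  finally show ?thesis
    unfolding K_def .
qed

lemma rounding_le_nat:
  fixes c r :: real and n :: nat
  assumes "c \<le> real n" "r \<in> {of_int \<lfloor>c\<rfloor>, of_int \<lceil>c\<rceil>}"
  shows "r \<le> real n"
proof -
  have "\<lceil>c\<rceil> \<le> int n"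
    using assms(1) by (simp add: ceiling_le_iff)
  then show ?thesis
    using assms by (auto intro: order_trans [OF of_int_floor_le])
qed

theorem mainTheorem5:
  fixes C :: "'k set" and \<Delta>t :: "'k \<Rightarrow> real"
    and D ca cb c0 c2 p x y eta_pa eta_ca Ct :: real and \<tau> :: nat
  assumes finC: "finite C"
    and D: "D > 0" and ca: "ca > 0" and cb: "cb > 0" and c0: "c0 > 0" and c2: "c2 > 0"
    and p: "0 < p" "p < 1" and x: "x > 0" and y0: "y \<ge> 0"
    and eta: "0 < eta_pa" "eta_pa \<le> 1" "0 < eta_ca" "eta_ca \<le> 1" "eta_pa + eta_ca = 1"
    and tau: "\<tau> \<ge> 1"
    and h1: "eta_pa * cb * c2 * (1 - p) * (2 - p) \<ge> D * y * (y + 1) * eta_ca"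
    and h2: "y > 1 - p"
    and h3: "Phi C D cb c2 p y eta_pa eta_ca \<ge> 0"
    and Dt: "\<forall>k\<in>C. 0 \<le> \<Delta>t k \<and> \<Delta>t k \<le> D"
    and Ct_mem: "Ct \<in> {of_int \<lfloor>C_hat D cb c2 p y eta_pa eta_ca\<rfloor>,
                       of_int \<lceil>C_hat D cb c2 p y eta_pa eta_ca\<rceil>}"
    and Ct_max: "\<forall>c\<in>{of_int \<lfloor>C_hat D cb c2 p y eta_pa eta_ca\<rfloor>,
                       of_int \<lceil>C_hat D cb c2 p y eta_pa eta_ca\<rceil>}.
                   U_att_lower C D cb c2 p y eta_pa eta_ca c \<Delta>t
                   \<le> U_att_lower C D cb c2 p y eta_pa eta_ca Ct \<Delta>t"
    and cond: "eta_pa * cb * c2 * (1 - p) \<ge> y * eta_ca * D * real \<tau> powr (1 - p - y)"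
  shows "C_hat D cb c2 p y eta_pa eta_ca \<le> real \<tau> \<and> Ct \<le> real \<tau>"
proof -
  have C_hat_le: "C_hat D cb c2 p y eta_pa eta_ca \<le> real \<tau>"
    using C_hat_le_iff [of D cb c2 p y eta_pa eta_ca "real \<tau>"] D cb c2 p h2 eta tau cond
    by simp
  moreover have "Ct \<le> real \<tau>"
    using rounding_le_nat [OF C_hat_le Ct_mem] .
  ultimately show ?thesis ..
qed

end
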